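(* Let $\nu:\mathcal{C}\to\mathbb{Z}$ and $\psi:\mathcal{C}\to\mathbb{R}$ be additive functions (group homomorphisms). If $\nu(\mathcal{K})=1$, then for all $\mathcal{K}'\in[\mathcal{K}]$, $\psi(\mathcal{K}')=\nu(\mathcal{K}')\,\psi(\mathcal{K})$.
   Context: $\mathcal{C}$ is the smooth knot concordance group. Let $\mathcal{C}^\circ=\mathcal{C}\setminus\{0\}$; $\mathcal{K}\sim'\mathcal{J}$ if there exist $\mathcal{M}\in\mathcal{C}$ and $r,s\in\mathbb{Z}$ with $\mathcal{K}=r\mathcal{M}$, $\mathcal{J}=s\mathcal{M}$; $\sim$ is the equivalence relation generated by $\sim'$; $[\mathcal{K}]$ denotes the $\sim$-class of $\mathcal{K}$ in $\mathbb{P}(\mathcal{C})=\mathcal{C}^\circ/\sim$. *)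

theory Defs
  imports Complex_Main
begin

text \<open>The smooth knot concordance group is not available in Isabelle/HOL; it is modelled
  by an arbitrary abelian group, i.e. a type of class ab_group_add.\<close>

definition zsmult :: "int \<Rightarrow> 'a::ab_group_add \<Rightarrow> 'a" where
  "zsmult r x = (if 0 \<le> r then (\<Sum>i<nat r. x) else - (\<Sum>i<nat (- r). x))"

definition pre_sim :: "'a::ab_group_add \<Rightarrow> 'a \<Rightarrow> bool" where
  "pre_sim K J \<longleftrightarrow> (\<exists>M r s. K = zsmult r M \<and> J = zsmult s M)"

definition pre_sim_nz :: "'a::ab_group_add \<Rightarrow> 'a \<Rightarrow> bool" where
  "pre_sim_nz K J \<longleftrightarrow> K \<noteq> 0 \<and> J \<noteq> 0 \<and> pre_sim K J"

definition proj_sim :: "'a::ab_group_add \<Rightarrow> 'a \<Rightarrow> bool" where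
  "proj_sim = (\<lambda>K J. pre_sim_nz K J \<or> pre_sim_nz J K)\<^sup>*\<^sup>*"

definition proj_class :: "'a::ab_group_add \<Rightarrow> 'a set" where
  "proj_class K = {J. J \<noteq> 0 \<and> proj_sim K J}"

end

theory Submission
  imports Defs
begin

text \<open>The map \<open>\<psi> - \<psi>(K) \<nu>\<close> is a homomorphism into the torsion-free group \<open>\<real>\<close>
  vanishing at \<open>K\<close>. The kernel of such a homomorphism is closed under \<open>\<sim>'\<close> between
  nonzero elements: if \<open>r M\<close> lies in it with \<open>r M \<noteq> 0\<close>, then \<open>r \<noteq> 0\<close>, so \<open>M\<close> lies in it
  by torsion-freeness, hence so does every multiple \<open>s M\<close>. Therefore the kernel
  contains the whole class \<open>[K]\<close>.\<close>

lemma zsmult_0_left [simp]: "zsmult 0 x = 0"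
  by (simp add: zsmult_def)

lemma zsmult_eq_of_int_mult: "zsmult r (y :: 'b::ring_1) = of_int r * y"
  by (simp add: zsmult_def)

lemma additive_zsmult:
  assumes "additive f"
  shows "f (zsmult r x) = zsmult r (f x)"
  using assms by (simp add: zsmult_def additive.sum additive.minus)

lemma additive_pre_sim_nz_kernel:
  fixes h :: "'a::ab_group_add \<Rightarrow> 'b::{idom, ring_char_0}"
  assumes h: "additive h" and "h J = 0" and "pre_sim_nz J J' \<or> pre_sim_nz J' J"
  shows "h J' = 0"
proof -
  have hom: "h (zsmult r M) = of_int r * h M" for r M
    using h by (simp add: additive_zsmult zsmult_eq_of_int_mult)
  obtain M r s where J: "J = zsmult r M" "J \<noteq> 0" and J': "J' = zsmult s M"
    using assms(3) unfolding pre_sim_nz_def pre_sim_def by blast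
  have "r \<noteq> 0"
    using J by auto
  with \<open>h J = 0\<close> have "h M = 0"
    by (simp add: J hom)
  then show ?thesis
    by (simp add: J' hom)
qed

lemma additive_proj_class_kernel:
  fixes h :: "'a::ab_group_add \<Rightarrow> 'b::{idom, ring_char_0}"
  assumes h: "additive h" and "h K = 0" and "K' \<in> proj_class K"
  shows "h K' = 0"
proof -
  have "proj_sim K K'"
    using assms(3) by (simp add: proj_class_def)
  then show ?thesis
    unfolding proj_sim_def
  proof (induction rule: rtranclp_induct)
    case base
    show ?case by (fact \<open>h K = 0\<close>)
  next
    case (step J J')
    then show ?case by (blast intro: additive_pre_sim_nz_kernel[OF h])
  qed
qed

theorem theorem7p1:
  fixes \<nu> :: "'c::ab_group_add \<Rightarrow> int" and \<psi> :: "'c \<Rightarrow> real" and K :: 'c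
  assumes nu_add: "\<And>a b. \<nu> (a + b) = \<nu> a + \<nu> b"
    and psi_add: "\<And>a b. \<psi> (a + b) = \<psi> a + \<psi> b"
    and nuK: "\<nu> K = 1"
  shows "\<forall>K' \<in> proj_class K. \<psi> K' = of_int (\<nu> K') * \<psi> K"
proof
  fix K' assume K': "K' \<in> proj_class K"
  define h where "h x = \<psi> x - of_int (\<nu> x) * \<psi> K" for x
  have "additive h"
    by unfold_locales (simp add: h_def nu_add psi_add algebra_simps)
  moreover have "h K = 0"
    by (simp add: h_def nuK)
  ultimately have "h K' = 0"
    using K' by (rule additive_proj_class_kernel)
  then show "\<psi> K' = of_int (\<nu> K') * \<psi> K"
    by (simp add: h_def)
qed

end
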